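(* In the gradient-tracking setting (see context), let $K_z=K_y\in\mathbb{R}^{Nd\times Nd}$ be such that $F$ has all its eigenvalues except $d$ of them (counted with algebraic multiplicity) inside the open unit disc. Then for every $\theta_0\in\mathbb{R}^p$ and every initial condition $(x(0),z(0))\in\mathbb{R}^{Nd}\times\mathbb{R}^{Nd}$ with $\sum_{i=1}^N z_i(0)=0$, the trajectory of $\begin{bmatrix}x\\ z\end{bmatrix}^+=F\begin{bmatrix}x\\ z\end{bmatrix}+G\theta_0$ is bounded and $\lim_{t\to\infty}x_i(t)=\Sigma\theta_0$ for every $i=1,\dots,N$.
   Context: Let $N,d,p$ be positive integers. For $i=1,\dots,N$ let $C_i\in\mathbb{R}^{d\times d}$ be symmetric positive definite and $\Gamma_i\in\mathbb{R}^{d\times p}$; set $Q_i:=-C_i\Gamma_i$, $C:=\mathrm{diag}(C_1,\dots,C_N)$ (block diagonal), $Q:=\mathrm{col}(Q_1,\dots,Q_N)$, and $\Sigma:=\big(\sum_{i=1}^N C_i\big)^{-1}\sum_{i=1}^N C_i\Gamma_i$; $\Sigma\theta_0$ is the unique minimizer of $\sum_i \frac12(\theta-\Gamma_i\theta_0)^\top C_i(\theta-\Gamma_i\theta_0)$. Gradient-tracking setting: $A\in\mathbb{R}^{N\times N}$ is row stochastic ($A\mathbf{1}_N=\mathbf{1}_N$, nonnegative entries) and $\tilde A\in\mathbb{R}^{N\times N}$ is column stochastic ($\mathbf{1}_N^\top\tilde A=\mathbf{1}_N^\top$, nonnegative entries), each having $1$ as a simple eigenvalue with all other eigenvalues in the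 open unit disc; $\mathbf{A}:=A\otimes I_d$, $\tilde{\mathbf{A}}:=\tilde A\otimes I_d$. State $(x,z)$ with $x=(x_1,\dots,x_N)$, $z=(z_1,\dots,z_N)$, $x_i,z_i\in\mathbb{R}^d$. For gains $K_y,K_z\in\mathbb{R}^{Nd\times Nd}$, $F=\begin{bmatrix}\mathbf{A}+K_yC & K_z\\ (\tilde{\mathbf{A}}-I_{Nd})C & \tilde{\mathbf{A}}\end{bmatrix}$, $G=\begin{bmatrix}K_yQ\\ (\tilde{\mathbf{A}}-I_{Nd})Q\end{bmatrix}$, $\theta_0\in\mathbb{R}^p$. *)

theory Defs
  imports Complex_Main "Jordan_Normal_Form.Jordan_Normal_Form"
begin

text \<open>Block index convention: agent i (0-based, i < N), component k (k < d)
  sits at position i*d + k of a stacked vector in R^(N d).\<close>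

definition kron_I :: "real mat \<Rightarrow> nat \<Rightarrow> real mat" where
  "kron_I A d = mat (dim_row A * d) (dim_col A * d)
     (\<lambda>(r,c). A $$ (r div d, c div d) * (if r mod d = c mod d then 1 else 0))"

definition blockdiag :: "nat \<Rightarrow> nat \<Rightarrow> (nat \<Rightarrow> real mat) \<Rightarrow> real mat" where
  "blockdiag N d Cs = mat (N*d) (N*d)
     (\<lambda>(r,c). if r div d = c div d then Cs (r div d) $$ (r mod d, c mod d) else 0)"

definition Qcol :: "nat \<Rightarrow> nat \<Rightarrow> nat \<Rightarrow> (nat \<Rightarrow> real mat) \<Rightarrow> (nat \<Rightarrow> real mat) \<Rightarrow> real mat" where
  "Qcol N d p Cs Gs = mat (N*d) p (\<lambda>(r,c). (- (Cs (r div d) * Gs (r div d))) $$ (r mod d, c))"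

definition symmetric_pd :: "nat \<Rightarrow> real mat \<Rightarrow> bool" where
  "symmetric_pd d C \<longleftrightarrow> C \<in> carrier_mat d d \<and> transpose_mat C = C \<and>
     (\<forall>v \<in> carrier_vec d. v \<noteq> 0\<^sub>v d \<longrightarrow> v \<bullet> (C *\<^sub>v v) > 0)"

definition row_stochastic :: "nat \<Rightarrow> real mat \<Rightarrow> bool" where
  "row_stochastic N A \<longleftrightarrow> A \<in> carrier_mat N N \<and> (\<forall>i<N. \<forall>j<N. A $$ (i,j) \<ge> 0) \<and>
     (\<forall>i<N. (\<Sum>j<N. A $$ (i,j)) = 1)"

definition col_stochastic :: "nat \<Rightarrow> real mat \<Rightarrow> bool" where
  "col_stochastic N A \<longleftrightarrow> A \<in> carrier_mat N N \<and> (\<forall>i<N. \<forall>j<N. A $$ (i,j) \<ge> 0) \<and>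
     (\<forall>j<N. (\<Sum>i<N. A $$ (i,j)) = 1)"

definition simple_one_rest_stable :: "real mat \<Rightarrow> bool" where
  "simple_one_rest_stable A \<longleftrightarrow>
     order 1 (char_poly (map_mat complex_of_real A)) = 1 \<and>
     (\<forall>z. eigenvalue (map_mat complex_of_real A) z \<longrightarrow> z \<noteq> 1 \<longrightarrow> cmod z < 1)"

definition num_eigs_outside_disc :: "real mat \<Rightarrow> nat" where
  "num_eigs_outside_disc M =
     (let P = char_poly (map_mat complex_of_real M) in
      \<Sum>z \<in> {z. poly P z = 0 \<and> cmod z \<ge> 1}. order z P)"

definition Fmat :: "nat \<Rightarrow> nat \<Rightarrow> real mat \<Rightarrow> real mat \<Rightarrow> (nat \<Rightarrow> real mat)
    \<Rightarrow> real mat \<Rightarrow> real mat \<Rightarrow> real mat" where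
  "Fmat N d A At Cs Ky Kz =
     four_block_mat (kron_I A d + Ky * blockdiag N d Cs) Kz
                    ((kron_I At d - 1\<^sub>m (N*d)) * blockdiag N d Cs) (kron_I At d)"

definition Gmat :: "nat \<Rightarrow> nat \<Rightarrow> nat \<Rightarrow> real mat \<Rightarrow> (nat \<Rightarrow> real mat)
    \<Rightarrow> (nat \<Rightarrow> real mat) \<Rightarrow> real mat \<Rightarrow> real mat" where
  "Gmat N d p At Cs Gs Ky =
     mat (2*(N*d)) p (\<lambda>(r,c). if r < N*d then (Ky * Qcol N d p Cs Gs) $$ (r,c)
        else ((kron_I At d - 1\<^sub>m (N*d)) * Qcol N d p Cs Gs) $$ (r - N*d, c))"

text \<open>Sigma = (sum C_i)^{-1} (sum C_i Gamma_i), as the unique solution S of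
  (sum C_i) S = sum C_i Gamma_i.\<close>
definition Sigma_mat :: "nat \<Rightarrow> nat \<Rightarrow> nat \<Rightarrow> (nat \<Rightarrow> real mat) \<Rightarrow> (nat \<Rightarrow> real mat) \<Rightarrow> real mat" where
  "Sigma_mat N d p Cs Gs =
     (THE S. S \<in> carrier_mat d p \<and>
        mat d d (\<lambda>(k,l). \<Sum>i<N. Cs i $$ (k,l)) * S =
        mat d p (\<lambda>(k,l). \<Sum>i<N. (Cs i * Gs i) $$ (k,l)))"

primrec traj :: "real mat \<Rightarrow> real mat \<Rightarrow> real vec \<Rightarrow> real vec \<Rightarrow> nat \<Rightarrow> real vec" where
  "traj F G th w0 0 = w0"
| "traj F G th w0 (Suc t) = F *\<^sub>v traj F G th w0 t + G *\<^sub>v th"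

end

theory Submission
  imports Defs "Jordan_Normal_Form.Spectral_Radius"
begin

(*
  The agent-sum of the tracking variables z is invariant under F, because At is column
  stochastic. Completing this d-dimensional functional to a change of basis T gives
  T F T\<^sup>-\<^sup>1 = [M, F2; 0, I\<^sub>d], so char_poly F = char_poly M * (x - 1)^d, and the hypothesis
  that only d eigenvalues of F lie outside the open unit disc puts all eigenvalues of M
  inside it; hence the powers of M decay geometrically. The consensus point x = 1 \<otimes> \<Sigma> \<theta>\<^sub>0
  with z = -(C x + Q \<theta>\<^sub>0) is a fixed point whose tracking sum vanishes by optimality of
  \<Sigma> \<theta>\<^sub>0. For initial states with zero tracking sum the error therefore stays in the block
  where F acts as M, so it tends to zero; convergence also gives boundedness.
*)

lemma sum_lessThan_add: "(\<Sum>j<a + (b::nat). g j) = (\<Sum>j<a. g j) + (\<Sum>j<b. g (a + j))"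
  by (induction b) (auto simp: ac_simps)

lemma sum_lessThan_mult: "(\<Sum>j<(N::nat) * d. g j) = (\<Sum>i<N. \<Sum>l<d. g (i * d + l))"
proof (induction N)
  case (Suc N)
  have "(\<Sum>j<Suc N * d. g j) = (\<Sum>j<N * d + d. g j)" by (simp add: add.commute)
  also have "\<dots> = (\<Sum>j<N * d. g j) + (\<Sum>l<d. g (N * d + l))" by (rule sum_lessThan_add)
  finally show ?case using Suc by simp
qed simp

lemma block_index_less:
  assumes "i < N" "k < d" shows "i * d + k < N * (d::nat)"
proof -
  have "i * d + k < Suc i * d" using assms(2) by simp
  also have "\<dots> \<le> N * d" using assms(1) by (intro mult_le_mono1) simp
  finally show ?thesis .
qed

lemma sum_block_index_indicator:
  assumes j: "j < N * d" and k: "k < (d::nat)"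
  shows "(\<Sum>i<N. if i * d + k = j then 1 else 0 :: real) = (if j mod d = k then 1 else 0)"
proof (cases "j mod d = k")
  case True
  then have "i * d + k = j \<longleftrightarrow> i = j div d" for i
    using k by (metis div_mult_mod_eq div_mult_self1 div_less mod_mult_self1 mod_less add.commute
        add.right_neutral less_zeroE nat_neq_iff)
  moreover have "j div d < N" using j by (simp add: less_mult_imp_div_less)
  ultimately show ?thesis using True by simp
next
  case False
  then have "i * d + k \<noteq> j" for i using k by auto
  then show ?thesis using False by simp
qed

lemma mult_mat_vec_index_sum:
  "A \<in> carrier_mat nr nc \<Longrightarrow> v \<in> carrier_vec nc \<Longrightarrow> i < nr \<Longrightarrow>
   (A *\<^sub>v v) $ i = (\<Sum>j<nc. A $$ (i, j) * v $ j)"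
  by (auto simp: scalar_prod_def lessThan_atLeast0 intro!: sum.cong)

lemma mult_mat_index_sum:
  "A \<in> carrier_mat nr n \<Longrightarrow> B \<in> carrier_mat n nc \<Longrightarrow> i < nr \<Longrightarrow> j < nc \<Longrightarrow>
   (A * B) $$ (i, j) = (\<Sum>l<n. A $$ (i, l) * B $$ (l, j))"
  by (auto simp: scalar_prod_def lessThan_atLeast0 intro!: sum.cong)

lemma scalar_prod_sum:
  "v \<in> carrier_vec n \<Longrightarrow> w \<in> carrier_vec n \<Longrightarrow> v \<bullet> w = (\<Sum>k<n. v $ k * w $ k)"
  by (auto simp: scalar_prod_def lessThan_atLeast0)

lemma mat_sum_mult_vec_index:
  assumes Cs: "\<And>i. i \<in> I \<Longrightarrow> Cs i \<in> carrier_mat n m" and v: "v \<in> carrier_vec m" and k: "k < n"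
  shows "(mat n m (\<lambda>(k, l). \<Sum>i\<in>I. Cs i $$ (k, l)) *\<^sub>v v) $ k = (\<Sum>i\<in>I. (Cs i *\<^sub>v v) $ k)"
proof -
  have "(mat n m (\<lambda>(k, l). \<Sum>i\<in>I. Cs i $$ (k, l)) *\<^sub>v v) $ k = (\<Sum>l<m. \<Sum>i\<in>I. Cs i $$ (k, l) * v $ l)"
    by (subst mult_mat_vec_index_sum[of _ n m]) (use v k in \<open>auto simp: sum_distrib_right\<close>)
  also have "\<dots> = (\<Sum>i\<in>I. \<Sum>l<m. Cs i $$ (k, l) * v $ l)" by (rule sum.swap)
  also have "\<dots> = (\<Sum>i\<in>I. (Cs i *\<^sub>v v) $ k)"
    using mult_mat_vec_index_sum[OF Cs v k] by simp
  finally show ?thesis .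
qed

lemma mult_mat_vec_sum3_zero:
  assumes A: "A \<in> carrier_mat nr nc" and abc: "a \<in> carrier_vec nc" "b \<in> carrier_vec nc" "c \<in> carrier_vec nc"
    and sum0: "a + b + c = 0\<^sub>v nc"
  shows "A *\<^sub>v a + A *\<^sub>v b + A *\<^sub>v c = 0\<^sub>v nr"
proof -
  have "A *\<^sub>v a + A *\<^sub>v b = A *\<^sub>v (a + b)"
    by (rule mult_add_distrib_mat_vec[symmetric, OF A abc(1,2)])
  also have "\<dots> + A *\<^sub>v c = A *\<^sub>v (a + b + c)"
    by (rule mult_add_distrib_mat_vec[symmetric, OF A _ abc(3)]) (use abc in auto)
  also have "\<dots> = 0\<^sub>v nr" unfolding sum0 using A by (intro eq_vecI) auto
  finally show ?thesis .
qed

lemma symmetric_pd_sum_quadratic_pos: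
  assumes I: "I \<noteq> {}" "finite I" and pd: "\<forall>i\<in>I. symmetric_pd d (Cs i)"
    and v: "v \<in> carrier_vec d" "v \<noteq> 0\<^sub>v d"
  shows "v \<bullet> (mat d d (\<lambda>(k, l). \<Sum>i\<in>I. Cs i $$ (k, l)) *\<^sub>v v) > 0"
proof -
  let ?S = "mat d d (\<lambda>(k, l). \<Sum>i\<in>I. Cs i $$ (k, l))"
  have Cs: "Cs i \<in> carrier_mat d d" if "i \<in> I" for i
    using pd that unfolding symmetric_pd_def by auto
  have "v \<bullet> (?S *\<^sub>v v) = (\<Sum>k<d. v $ k * (?S *\<^sub>v v) $ k)"
    by (rule scalar_prod_sum[OF v(1) mult_mat_vec_carrier[OF _ v(1)]]) simp
  also have "\<dots> = (\<Sum>k<d. \<Sum>i\<in>I. v $ k * (Cs i *\<^sub>v v) $ k)"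
  proof (rule sum.cong[OF refl])
    fix k assume "k \<in> {..<d}"
    then show "v $ k * (?S *\<^sub>v v) $ k = (\<Sum>i\<in>I. v $ k * (Cs i *\<^sub>v v) $ k)"
      by (simp only: mat_sum_mult_vec_index[OF Cs v(1)] lessThan_iff sum_distrib_left)
  qed
  also have "\<dots> = (\<Sum>i\<in>I. \<Sum>k<d. v $ k * (Cs i *\<^sub>v v) $ k)" by (rule sum.swap)
  also have "\<dots> = (\<Sum>i\<in>I. v \<bullet> (Cs i *\<^sub>v v))"
    using scalar_prod_sum[OF v(1) mult_mat_vec_carrier[OF Cs v(1)]] by simp
  also have "\<dots> > 0"
    using pd v I unfolding symmetric_pd_def by (intro sum_pos) auto
  finally show ?thesis .
qed

section \<open>Powers of matrices with spectrum in the open unit disc\<close>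

lemma smult_mat_mult_vec:
  "A \<in> carrier_mat nr nc \<Longrightarrow> v \<in> carrier_vec nc \<Longrightarrow> (c \<cdot>\<^sub>m A) *\<^sub>v v = c \<cdot>\<^sub>v (A *\<^sub>v v)"
  by (auto intro!: eq_vecI simp: scalar_prod_def sum_distrib_left mult.assoc)

lemma pow_smult_mat:
  fixes A :: "'a :: comm_ring_1 mat"
  assumes A: "A \<in> carrier_mat n n"
  shows "(c \<cdot>\<^sub>m A) ^\<^sub>m k = c ^ k \<cdot>\<^sub>m A ^\<^sub>m k"
proof (induction k)
  case (Suc k)
  have Ak: "A ^\<^sub>m k \<in> carrier_mat n n" using A by simp
  show ?case
    by (rule eq_matI) (use A Ak in \<open>auto simp: Suc scalar_prod_def sum_distrib_left ac_simps\<close>)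
qed (use A in auto)

lemma eigenvalue_smult_mat:
  assumes A: "A \<in> carrier_mat n n" and ev: "eigenvalue A mu"
  shows "eigenvalue (c \<cdot>\<^sub>m A) (c * mu)"
proof -
  from ev obtain v where v: "v \<in> carrier_vec n" "v \<noteq> 0\<^sub>v n" "A *\<^sub>v v = mu \<cdot>\<^sub>v v"
    using A unfolding eigenvalue_def eigenvector_def by auto
  have "(c \<cdot>\<^sub>m A) *\<^sub>v v = (c * mu) \<cdot>\<^sub>v v"
    using A v by (simp add: smult_mat_mult_vec smult_smult_assoc)
  then show ?thesis using A v unfolding eigenvalue_def eigenvector_def by auto
qed

lemma spectral_radius_less_1:
  fixes A :: "complex mat"
  assumes A: "A \<in> carrier_mat n n" and n: "n > 0"
    and ev: "\<And>z. eigenvalue A z \<Longrightarrow> cmod z < 1"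
  shows "spectral_radius A < 1"
  using spectral_radius_mem_max(1)[OF A n] ev unfolding spectrum_def by auto

text \<open>Rescaling by a radius strictly between the spectral radius and 1 reduces the decay
  estimate to the boundedness of powers of a matrix of spectral radius below 1.\<close>
lemma pow_mat_geometric_bound:
  fixes M :: "real mat"
  assumes M: "M \<in> carrier_mat n n" and n: "n > 0"
    and ev: "\<And>z. poly (char_poly (map_mat complex_of_real M)) z = 0 \<Longrightarrow> cmod z < 1"
  obtains r c where "0 < r" "r < 1"
    "\<And>k i j. i < n \<Longrightarrow> j < n \<Longrightarrow> \<bar>(M ^\<^sub>m k) $$ (i, j)\<bar> \<le> r ^ k * c"
proof -
  define MC where "MC = map_mat complex_of_real M"
  have MC: "MC \<in> carrier_mat n n" using M unfolding MC_def by auto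
  define \<rho> where "\<rho> = spectral_radius MC"
  have "\<rho> < 1" unfolding \<rho>_def
    by (rule spectral_radius_less_1[OF MC n])
      (use ev eigenvalue_root_char_poly[OF MC] in \<open>auto simp: MC_def\<close>)
  moreover have "0 \<le> \<rho>" using spectral_radius_mem_max(1)[OF MC n] unfolding \<rho>_def by auto
  ultimately obtain r where r: "0 < r" "r < 1" "\<rho> < r" by (intro that[of "(1 + \<rho>) / 2"]) auto
  define Mr where "Mr = (1 / complex_of_real r) \<cdot>\<^sub>m MC"
  have Mr: "Mr \<in> carrier_mat n n" using MC unfolding Mr_def by auto
  have MC_Mr: "MC = complex_of_real r \<cdot>\<^sub>m Mr"
    using MC r(1) unfolding Mr_def by (auto intro!: eq_matI)
  have "spectral_radius Mr < 1"
  proof (rule spectral_radius_less_1[OF Mr n])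
    fix mu assume "eigenvalue Mr mu"
    then have "eigenvalue MC (complex_of_real r * mu)"
      unfolding MC_Mr by (rule eigenvalue_smult_mat[OF Mr])
    then have "cmod (complex_of_real r * mu) \<le> \<rho>"
      using spectral_radius_mem_max(2)[OF MC n] unfolding \<rho>_def spectrum_def by auto
    then have "r * cmod mu \<le> \<rho>" using r by (simp add: norm_mult)
    then have "r * cmod mu < r * 1" using r by linarith
    then show "cmod mu < 1" using r(1) by (simp only: mult_less_cancel_left_pos)
  qed
  then obtain c where c: "\<And>k. norm_bound (Mr ^\<^sub>m k) c"
    using spectral_radius_jnf_norm_bound_less_1_upper_triangular[OF Mr] by auto
  show ?thesis
  proof (rule that[OF r(1,2)])
    fix k i j assume ij: "i < n" "j < n"
    have "map_mat complex_of_real (M ^\<^sub>m k) = MC ^\<^sub>m k"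
      unfolding MC_def by (rule of_real_hom.mat_hom_pow[OF M])
    also have "\<dots> = complex_of_real r ^ k \<cdot>\<^sub>m Mr ^\<^sub>m k"
      unfolding MC_Mr by (rule pow_smult_mat[OF Mr])
    finally have "map_mat complex_of_real (M ^\<^sub>m k) $$ (i, j) = (complex_of_real r ^ k \<cdot>\<^sub>m Mr ^\<^sub>m k) $$ (i, j)"
      by simp
    then have "complex_of_real ((M ^\<^sub>m k) $$ (i, j)) = complex_of_real r ^ k * (Mr ^\<^sub>m k) $$ (i, j)"
      using M Mr ij by simp
    then have "\<bar>(M ^\<^sub>m k) $$ (i, j)\<bar> = r ^ k * cmod ((Mr ^\<^sub>m k) $$ (i, j))"
      using r(1) by (metis norm_mult norm_of_real norm_power abs_of_nonneg less_imp_le)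
    also have "\<dots> \<le> r ^ k * c"
      using c[of k] ij Mr r(1) unfolding norm_bound_def by (auto intro: mult_left_mono)
    finally show "\<bar>(M ^\<^sub>m k) $$ (i, j)\<bar> \<le> r ^ k * c" .
  qed
qed

lemma pow_mat_mult_vec_tendsto_zero:
  fixes M :: "real mat"
  assumes M: "M \<in> carrier_mat n n"
    and ev: "\<And>z. poly (char_poly (map_mat complex_of_real M)) z = 0 \<Longrightarrow> cmod z < 1"
    and h: "h \<in> carrier_vec n" and i: "i < n"
  shows "(\<lambda>t. (M ^\<^sub>m t *\<^sub>v h) $ i) \<longlonglongrightarrow> 0"
proof -
  obtain r c where r: "0 < r" "r < 1"
    and bound: "\<And>k i j. i < n \<Longrightarrow> j < n \<Longrightarrow> \<bar>(M ^\<^sub>m k) $$ (i, j)\<bar> \<le> r ^ k * c"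
    using pow_mat_geometric_bound[OF M _ ev] i by (metis less_nat_zero_code neq0_conv)
  define S where "S = (\<Sum>j<n. \<bar>h $ j\<bar>)"
  have bound_vec: "norm ((M ^\<^sub>m t *\<^sub>v h) $ i) \<le> r ^ t * c * S" for t
  proof -
    have Mt: "M ^\<^sub>m t \<in> carrier_mat n n" using M by simp
    have "norm ((M ^\<^sub>m t *\<^sub>v h) $ i) = \<bar>\<Sum>j<n. (M ^\<^sub>m t) $$ (i, j) * h $ j\<bar>"
      by (simp add: mult_mat_vec_index_sum[OF Mt h i])
    also have "\<dots> \<le> (\<Sum>j<n. \<bar>(M ^\<^sub>m t) $$ (i, j)\<bar> * \<bar>h $ j\<bar>)"
      unfolding abs_mult[symmetric] by (rule sum_abs)
    also have "\<dots> \<le> (\<Sum>j<n. r ^ t * c * \<bar>h $ j\<bar>)"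
      by (intro sum_mono mult_right_mono) (use bound i in auto)
    finally show ?thesis unfolding S_def by (simp add: sum_distrib_left)
  qed
  have "(\<lambda>t. r ^ t * c * S) \<longlonglongrightarrow> 0"
    by (intro tendsto_mult_left_zero LIMSEQ_power_zero) (use r in auto)
  then show ?thesis
  proof (rule tendsto_0_le[where K = 1])
    show "\<forall>\<^sub>F t in sequentially. norm ((M ^\<^sub>m t *\<^sub>v h) $ i) \<le> norm (r ^ t * c * S) * 1"
      using bound_vec by (intro always_eventually allI) (auto intro: order_trans[OF _ abs_ge_self])
  qed
qed

lemma mult_mat_vec_tendsto_zero:
  assumes A: "A \<in> carrier_mat n m" and v: "\<And>t. v t \<in> carrier_vec m"
    and lim: "\<And>l. l < m \<Longrightarrow> (\<lambda>t. v t $ l) \<longlonglongrightarrow> 0" and j: "j < n"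
  shows "(\<lambda>t. (A *\<^sub>v v t) $ j) \<longlonglongrightarrow> (0 :: real)"
proof -
  have "(\<lambda>t. \<Sum>l<m. A $$ (j, l) * v t $ l) \<longlonglongrightarrow> 0"
    using lim by (intro tendsto_null_sum tendsto_mult_right_zero) auto
  then show ?thesis using mult_mat_vec_index_sum[OF A v j] by simp
qed

lemma convergent_components_bounded:
  fixes f :: "nat \<Rightarrow> nat \<Rightarrow> real"
  assumes conv: "\<And>j. j < n \<Longrightarrow> convergent (\<lambda>t. f t j)"
  shows "\<exists>B. \<forall>t. \<forall>j<n. \<bar>f t j\<bar> \<le> B"
proof -
  have "\<exists>K. \<forall>t. \<bar>f t j\<bar> \<le> K" if "j < n" for j
    using convergent_imp_Bseq[OF conv[OF that]] by (auto simp: Bseq_def)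
  then obtain K where K: "\<And>j t. j < n \<Longrightarrow> \<bar>f t j\<bar> \<le> K j" by metis
  have "\<bar>f t j\<bar> \<le> (\<Sum>l<n. \<bar>K l\<bar>)" if j: "j < n" for t j
  proof -
    have "\<bar>f t j\<bar> \<le> \<bar>K j\<bar>" using K[OF j, of t] by linarith
    also have "\<dots> \<le> (\<Sum>l<n. \<bar>K l\<bar>)" by (rule member_le_sum) (use j in auto)
    finally show ?thesis .
  qed
  then show ?thesis by blast
qed

section \<open>Affine iterations and block-triangular similarity\<close>

lemma pow_mat_Suc_left:
  assumes A: "A \<in> carrier_mat n n"
  shows "A ^\<^sub>m Suc k = A * A ^\<^sub>m k"
proof (induction k)
  case (Suc k)
  have "A ^\<^sub>m Suc (Suc k) = A ^\<^sub>m Suc k * A" by simp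
  also have "\<dots> = (A * A ^\<^sub>m k) * A" unfolding Suc ..
  also have "\<dots> = A * (A ^\<^sub>m k * A)" using A by (simp add: assoc_mult_mat[of _ n n _ n _ n])
  finally show ?case by simp
qed (use A in simp)

lemma traj_minus_fixpoint:
  assumes F: "F \<in> carrier_mat n n" and G: "G \<in> carrier_mat n p" and th: "th \<in> carrier_vec p"
    and w0: "w0 \<in> carrier_vec n" and ws: "ws \<in> carrier_vec n"
    and fix_ws: "F *\<^sub>v ws + G *\<^sub>v th = ws"
  shows "traj F G th w0 t - ws = F ^\<^sub>m t *\<^sub>v (w0 - ws)"
proof (induction t)
  case 0
  then show ?case using F w0 ws by (auto simp: carrier_matD)
next
  case (Suc t)
  have wt: "traj F G th w0 t \<in> carrier_vec n"
    by (induction t) (use F G th w0 in auto)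
  have "traj F G th w0 (Suc t) - ws = (F *\<^sub>v traj F G th w0 t + G *\<^sub>v th) - (F *\<^sub>v ws + G *\<^sub>v th)"
    by (simp add: fix_ws)
  also have "\<dots> = F *\<^sub>v traj F G th w0 t - F *\<^sub>v ws"
    by (rule eq_vecI) (use F G th wt ws in auto)
  also have "\<dots> = F *\<^sub>v (traj F G th w0 t - ws)"
    by (rule mult_minus_distrib_mat_vec[symmetric, OF F wt ws])
  also have "\<dots> = (F * F ^\<^sub>m t) *\<^sub>v (w0 - ws)"
    unfolding Suc by (rule assoc_mult_mat_vec[symmetric]) (use F w0 ws in auto)
  finally show ?case unfolding pow_mat_Suc_left[OF F] .
qed

lemma char_poly_four_block_mat_lower_left_zero:
  fixes A1 :: "'a :: field mat"
  assumes A1: "A1 \<in> carrier_mat n n" and A2: "A2 \<in> carrier_mat n m" and A4: "A4 \<in> carrier_mat m m"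
  shows "char_poly (four_block_mat A1 A2 (0\<^sub>m m n) A4) = char_poly A1 * char_poly A4"
proof -
  let ?cm = "\<lambda>A. [:0, 1:] \<cdot>\<^sub>m 1\<^sub>m (dim_row A) + map_mat (\<lambda>a. [:- a:]) A"
  have "?cm (four_block_mat A1 A2 (0\<^sub>m m n) A4) =
      four_block_mat (?cm A1) (map_mat (\<lambda>a. [:- a:]) A2) (0\<^sub>m m n) (?cm A4)"
    by (rule eq_matI) (use A1 A2 A4 in \<open>auto simp: one_poly_def\<close>)
  moreover have "det \<dots> = det (?cm A1) * det (?cm A4)"
    by (rule det_four_block_mat_lower_left_zero[OF _ _ refl]) (use A1 A2 A4 in auto)
  ultimately show ?thesis unfolding char_poly_defs using A1 A4 by simp
qed

lemma char_poly_one_mat: "char_poly (1\<^sub>m d :: 'a :: field mat) = [:-1, 1:] ^ d"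
proof -
  have "char_poly (1\<^sub>m d :: 'a mat) = (\<Prod>a\<leftarrow>diag_mat (1\<^sub>m d :: 'a mat). [:- a, 1:])"
    by (rule char_poly_upper_triangular[of _ d]) (auto simp: upper_triangular_def)
  also have "diag_mat (1\<^sub>m d :: 'a mat) = replicate d 1"
    by (rule nth_equalityI) (auto simp: diag_mat_def)
  finally show ?thesis by (simp add: prod_list_replicate)
qed

lemma roots_in_unit_disc_of_outside_count:
  fixes P :: "complex poly"
  assumes P0: "P \<noteq> 0" and d: "d > 0"
    and count: "(\<Sum>z \<in> {z. poly (P * [:-1, 1:] ^ d) z = 0 \<and> cmod z \<ge> 1}. order z (P * [:-1, 1:] ^ d)) = d"
    and root: "poly P z = 0"
  shows "cmod z < 1"
proof (rule ccontr)
  assume "\<not> cmod z < 1"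
  let ?Q = "P * [:-1, 1:] ^ d"
  let ?S = "{z. poly ?Q z = 0 \<and> cmod z \<ge> 1}"
  have Q0: "?Q \<noteq> 0" using P0 by auto
  have fin: "finite ?S" by (rule finite_subset[OF _ poly_roots_finite[OF Q0]]) auto
  have order_1: "order 1 ?Q = order 1 P + d"
    using order_mult[OF Q0] order_power_n_n[of 1 d] by simp
  have order_z: "order z P \<ge> 1" using root P0 order_root[of P z] by auto
  have S: "1 \<in> ?S" "z \<in> ?S" using d root \<open>\<not> cmod z < 1\<close> by (auto simp: poly_power)
  show False
  proof (cases "z = 1")
    case True
    have "order 1 ?Q \<le> (\<Sum>z \<in> ?S. order z ?Q)" by (rule member_le_sum[OF S(1) _ fin]) simp
    then show False using count order_1 order_z True by simp
  next
    case False
    have "(\<Sum>x \<in> {1, z}. order x ?Q) \<le> (\<Sum>x \<in> ?S. order x ?Q)"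
      by (rule sum_mono2[OF fin]) (use S in auto)
    moreover have "order z ?Q \<ge> 1" using order_z order_mult[OF Q0] by simp
    ultimately show False using count order_1 False by simp
  qed
qed

lemma similar_mat_wit_four_block_triangular:
  fixes F1 :: "'a :: comm_ring_1 mat"
  assumes F1: "F1 \<in> carrier_mat q q" and F2: "F2 \<in> carrier_mat q d"
    and F3: "F3 \<in> carrier_mat d q" and F4: "F4 \<in> carrier_mat d d" and U: "U \<in> carrier_mat d q"
    and UF1: "U * F1 + F3 = U" and UF2: "U * F2 + F4 = 1\<^sub>m d"
  shows "similar_mat_wit (four_block_mat F1 F2 F3 F4) (four_block_mat (F1 - F2 * U) F2 (0\<^sub>m d q) (1\<^sub>m d))
    (four_block_mat (1\<^sub>m q) (0\<^sub>m q d) (- U) (1\<^sub>m d)) (four_block_mat (1\<^sub>m q) (0\<^sub>m q d) U (1\<^sub>m d))"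
    (is "similar_mat_wit ?F ?B ?P ?Q")
proof (rule similar_mat_witI)
  have carr: "F2 * U \<in> carrier_mat q q" "U * F1 \<in> carrier_mat d q" "U * F2 \<in> carrier_mat d d"
    using F1 F2 U by auto
  have "?P * ?Q = four_block_mat (1\<^sub>m q) (0\<^sub>m q d) (0\<^sub>m d q) (1\<^sub>m d)"
    using U by (subst mult_four_block_mat[of _ q q _ d _ d]) (auto intro!: cong_four_block_mat eq_matI)
  then show PQ: "?P * ?Q = 1\<^sub>m (q + d)" by simp
  have "?Q * ?P = four_block_mat (1\<^sub>m q) (0\<^sub>m q d) (0\<^sub>m d q) (1\<^sub>m d)"
    using U by (subst mult_four_block_mat[of _ q q _ d _ d]) (auto intro!: cong_four_block_mat eq_matI)
  then show "?Q * ?P = 1\<^sub>m (q + d)" by simp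
  have "?Q * ?F = four_block_mat F1 F2 U (1\<^sub>m d)"
    using F1 F2 F3 F4 U UF1 UF2 by (subst mult_four_block_mat[of _ q q _ d _ d]) auto
  also have "\<dots> = ?B * ?Q"
    using F1 F2 U carr by (subst mult_four_block_mat[of _ q q _ d _ d]) auto
  finally have "?P * (?Q * ?F) = ?P * (?B * ?Q)" by simp
  moreover have "?P * (?Q * ?F) = (?P * ?Q) * ?F"
    by (rule assoc_mult_mat[symmetric]) (use F1 F2 F3 F4 U in auto)
  moreover have "?P * (?B * ?Q) = ?P * ?B * ?Q"
    by (rule assoc_mult_mat[symmetric]) (use F1 F2 U in auto)
  ultimately show "?F = ?P * ?B * ?Q" using F1 F2 F3 F4 unfolding PQ by simp
qed (use F1 F2 F3 F4 U in auto)

lemma four_block_mat_upper_pow_mult_vec: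
  assumes M: "M \<in> carrier_mat q q" and B: "B \<in> carrier_mat q d" and D: "D \<in> carrier_mat d d"
    and h: "h \<in> carrier_vec q"
  shows "four_block_mat M B (0\<^sub>m d q) D ^\<^sub>m k *\<^sub>v (h @\<^sub>v 0\<^sub>v d) = (M ^\<^sub>m k *\<^sub>v h) @\<^sub>v 0\<^sub>v d"
  using h
proof (induction k arbitrary: h)
  case 0
  then show ?case using M D by simp
next
  case (Suc k)
  let ?X = "four_block_mat M B (0\<^sub>m d q) D"
  have X: "?X \<in> carrier_mat (q + d) (q + d)" using M B D by auto
  have "?X *\<^sub>v (h @\<^sub>v 0\<^sub>v d) = (M *\<^sub>v h + B *\<^sub>v 0\<^sub>v d) @\<^sub>v (0\<^sub>m d q *\<^sub>v h + D *\<^sub>v 0\<^sub>v d)"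
    by (rule four_block_mat_mult_vec[OF M B _ D Suc.prems]) auto
  also have "\<dots> = (M *\<^sub>v h) @\<^sub>v 0\<^sub>v d"
    using M B D Suc.prems by (intro arg_cong2[where f = append_vec] eq_vecI) auto
  finally have "?X *\<^sub>v (h @\<^sub>v 0\<^sub>v d) = (M *\<^sub>v h) @\<^sub>v 0\<^sub>v d" .
  then have "?X ^\<^sub>m Suc k *\<^sub>v (h @\<^sub>v 0\<^sub>v d) = ?X ^\<^sub>m k *\<^sub>v ((M *\<^sub>v h) @\<^sub>v 0\<^sub>v d)"
    using X Suc.prems by (simp add: assoc_mult_mat_vec[of _ "q + d" "q + d"])
  also have "\<dots> = (M ^\<^sub>m k *\<^sub>v (M *\<^sub>v h)) @\<^sub>v 0\<^sub>v d" using M Suc by simp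
  also have "M ^\<^sub>m k *\<^sub>v (M *\<^sub>v h) = M ^\<^sub>m Suc k *\<^sub>v h"
    using M Suc.prems by (simp add: assoc_mult_mat_vec[of "M ^\<^sub>m k" q q M q])
  finally show ?case .
qed

section \<open>The gradient-tracking iteration\<close>

locale gradient_tracking =
  fixes N d p :: nat and Cs Gs :: "nat \<Rightarrow> real mat" and A At Ky :: "real mat"
  assumes N_pos: "N > 0" and d_pos: "d > 0"
    and Cs_pd: "\<forall>i<N. symmetric_pd d (Cs i)"
    and Gs_carrier: "\<forall>i<N. Gs i \<in> carrier_mat d p"
    and A_row_stochastic: "row_stochastic N A" and At_col_stochastic: "col_stochastic N At"
    and Ky_carrier: "Ky \<in> carrier_mat (N * d) (N * d)"
begin

abbreviation "AI \<equiv> kron_I A d"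
abbreviation "AtI \<equiv> kron_I At d"
abbreviation "Cblk \<equiv> blockdiag N d Cs"
abbreviation "Qblk \<equiv> Qcol N d p Cs Gs"
abbreviation "F \<equiv> Fmat N d A At Cs Ky Ky"
abbreviation "G \<equiv> Gmat N d p At Cs Gs Ky"
abbreviation "Csum \<equiv> mat d d (\<lambda>(k, l). \<Sum>i<N. Cs i $$ (k, l))"
abbreviation "CGsum \<equiv> mat d p (\<lambda>(k, l). \<Sum>i<N. (Cs i * Gs i) $$ (k, l))"

lemma Cs_carrier: "i < N \<Longrightarrow> Cs i \<in> carrier_mat d d"
  using Cs_pd unfolding symmetric_pd_def by auto

lemma CGs_carrier: "i < N \<Longrightarrow> Cs i * Gs i \<in> carrier_mat d p"
  using Cs_carrier Gs_carrier by (meson mult_carrier_mat)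

lemma block_carriers:
  "AI \<in> carrier_mat (N * d) (N * d)" "AtI \<in> carrier_mat (N * d) (N * d)"
  "Cblk \<in> carrier_mat (N * d) (N * d)" "Qblk \<in> carrier_mat (N * d) p"
  using A_row_stochastic At_col_stochastic
  unfolding row_stochastic_def col_stochastic_def kron_I_def blockdiag_def Qcol_def by auto

lemma F_carrier: "F \<in> carrier_mat (N * d + N * d) (N * d + N * d)"
  unfolding Fmat_def using block_carriers Ky_carrier by (intro four_block_carrier_mat) auto

lemma G_carrier: "G \<in> carrier_mat (N * d + N * d) p"
  unfolding Gmat_def by auto

lemma AtI_index:
  "r < N * d \<Longrightarrow> c < N * d \<Longrightarrow> AtI $$ (r, c) = At $$ (r div d, c div d) * (if r mod d = c mod d then 1 else 0)"
  using At_col_stochastic unfolding col_stochastic_def kron_I_def by auto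

lemma F_lower_index:
  assumes r: "r < N * d" and c: "c < N * d + N * d"
  shows "F $$ (N * d + r, c) = (if c < N * d then ((AtI - 1\<^sub>m (N * d)) * Cblk) $$ (r, c) else AtI $$ (r, c - N * d))"
proof -
  have dims: "dim_row (AI + Ky * Cblk) = N * d" "dim_col (AI + Ky * Cblk) = N * d"
    "dim_row AtI = N * d" "dim_col AtI = N * d" "dim_row Ky = N * d" "dim_col Ky = N * d"
    "dim_row Cblk = N * d" "dim_col Cblk = N * d"
    using block_carriers Ky_carrier by auto
  show ?thesis unfolding Fmat_def
    by (subst index_mat_four_block(1)) (use r c in \<open>simp_all add: dims del: index_mult_mat index_add_mat index_minus_mat\<close>)
qed

text \<open>Column stochasticity of \<open>At\<close> makes the agent-sum of the tracking variables
  invariant under \<open>F\<close>.\<close>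
lemma sum_tracking_rows_F:
  assumes k: "k < d" and c: "c < N * d + N * d"
  shows "(\<Sum>i<N. F $$ (N * d + (i * d + k), c)) = (if N * d \<le> c \<and> c mod d = k then 1 else 0)"
proof -
  have col_sum: "(\<Sum>i<N. At $$ (i, j)) = 1" if "j < N" for j
    using At_col_stochastic that unfolding col_stochastic_def by auto
  have ik: "i * d + k < N * d" if "i < N" for i using block_index_less[OF that k] .
  have ik_div_mod: "(i * d + k) div d = i" "(i * d + k) mod d = k" for i using k by simp_all
  show ?thesis
  proof (cases "c < N * d")
    case True
    have "(\<Sum>i<N. F $$ (N * d + (i * d + k), c)) = (\<Sum>i<N. ((AtI - 1\<^sub>m (N * d)) * Cblk) $$ (i * d + k, c))"
      using True ik c by (intro sum.cong) (auto simp: F_lower_index)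
    also have "\<dots> = (\<Sum>i<N. \<Sum>j<N * d. (AtI - 1\<^sub>m (N * d)) $$ (i * d + k, j) * Cblk $$ (j, c))"
      using True ik block_carriers by (intro sum.cong refl mult_mat_index_sum) auto
    also have "\<dots> = (\<Sum>j<N * d. (\<Sum>i<N. (AtI - 1\<^sub>m (N * d)) $$ (i * d + k, j)) * Cblk $$ (j, c))"
      by (subst sum.swap) (simp add: sum_distrib_right)
    also have "\<dots> = 0"
    proof (intro sum.neutral ballI)
      fix j assume "j \<in> {..<N * d}"
      then have j: "j < N * d" by simp
      have "(\<Sum>i<N. (AtI - 1\<^sub>m (N * d)) $$ (i * d + k, j))
          = (\<Sum>i<N. At $$ (i, j div d)) * (if k = j mod d then 1 else 0) - (\<Sum>i<N. if i * d + k = j then 1 else 0)"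
        using ik j k block_carriers by (simp add: AtI_index ik_div_mod sum_subtractf sum_distrib_right)
      also have "\<dots> = 0"
        using col_sum[of "j div d"] sum_block_index_indicator[OF j k] j by (simp add: less_mult_imp_div_less)
      finally show "(\<Sum>i<N. (AtI - 1\<^sub>m (N * d)) $$ (i * d + k, j)) * Cblk $$ (j, c) = 0" by simp
    qed
    finally show ?thesis using True by simp
  next
    case False
    then obtain c' where c': "c = N * d + c'" "c' < N * d" using c by (metis add_less_cancel_left le_Suc_ex not_less)
    have "(\<Sum>i<N. F $$ (N * d + (i * d + k), c)) = (\<Sum>i<N. At $$ (i, c' div d)) * (if k = c' mod d then 1 else 0)"
      using ik c' k by (simp add: F_lower_index AtI_index ik_div_mod sum_distrib_right)
    then show ?thesis
      using col_sum[of "c' div d"] c' by (simp add: less_mult_imp_div_less)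
  qed
qed

lemma Sigma_mat_characterization:
  "Sigma_mat N d p Cs Gs \<in> carrier_mat d p" "Csum * Sigma_mat N d p Cs Gs = CGsum"
proof -
  have "det Csum \<noteq> 0"
  proof
    assume "det Csum = 0"
    then obtain v where v: "v \<in> carrier_vec d" "v \<noteq> 0\<^sub>v d" "Csum *\<^sub>v v = 0\<^sub>v d"
      using det_0_iff_vec_prod_zero[of Csum d] by auto
    then show False using symmetric_pd_sum_quadratic_pos[of "{..<N}" d Cs v] N_pos Cs_pd by auto
  qed
  then obtain B where B: "B \<in> carrier_mat d d" "B * Csum = 1\<^sub>m d" "Csum * B = 1\<^sub>m d"
    using det_non_zero_imp_unit[of Csum d] unfolding Units_def ring_mat_def by auto
  have "\<exists>!S. S \<in> carrier_mat d p \<and> Csum * S = CGsum"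
  proof (rule ex1I[of _ "B * CGsum"])
    show "B * CGsum \<in> carrier_mat d p \<and> Csum * (B * CGsum) = CGsum"
      using B by (auto simp: assoc_mult_mat[symmetric, of Csum d d B d CGsum p])
    fix S assume "S \<in> carrier_mat d p \<and> Csum * S = CGsum"
    then have S: "S \<in> carrier_mat d p" "Csum * S = CGsum" by auto
    have "S = (B * Csum) * S" unfolding B(2) by (rule left_mult_one_mat[OF S(1), symmetric])
    also have "\<dots> = B * (Csum * S)" by (rule assoc_mult_mat[OF B(1) _ S(1)]) simp
    also have "\<dots> = B * CGsum" unfolding S(2) ..
    finally show "S = B * CGsum" .
  qed
  then have "Sigma_mat N d p Cs Gs \<in> carrier_mat d p \<and> Csum * Sigma_mat N d p Cs Gs = CGsum"
    unfolding Sigma_mat_def by (rule theI')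
  then show "Sigma_mat N d p Cs Gs \<in> carrier_mat d p" "Csum * Sigma_mat N d p Cs Gs = CGsum" by auto
qed

definition "q = N * d + (N - 1) * d"

text \<open>The agent-sum of the tracking variables is \<open>[U | 1]\<close>: the last \<open>d\<close> coordinates are the
  tracking block of the last agent. Completing it by the first \<open>q\<close> coordinates gives the change
  of basis \<open>T\<close> below.\<close>
definition "U = mat d q (\<lambda>(k, j). if N * d \<le> j \<and> j mod d = k then 1 else (0::real))"

definition "F1 = mat q q (\<lambda>(i, j). F $$ (i, j))"
definition "F2 = mat q d (\<lambda>(i, j). F $$ (i, j + q))"
definition "F3 = mat d q (\<lambda>(i, j). F $$ (i + q, j))"
definition "F4 = mat d d (\<lambda>(i, j). F $$ (i + q, j + q))"
definition "M = F1 - F2 * U"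

lemma q_plus_d: "q + d = N * d + N * d"
  unfolding q_def using N_pos by (cases N) auto

lemma U_sum:
  assumes k: "k < d"
  shows "(\<Sum>j<q. U $$ (k, j) * f j) + f (q + k) = (\<Sum>i<N. f (N * d + (i * d + k)))"
proof -
  obtain N' where N': "N = Suc N'" using N_pos by (cases N) auto
  have q: "q = N * d + N' * d" unfolding q_def by (simp add: N')
  have "(\<Sum>j<q. U $$ (k, j) * f j) = (\<Sum>j<N * d. U $$ (k, j) * f j) + (\<Sum>j<N' * d. U $$ (k, N * d + j) * f (N * d + j))"
    unfolding q by (rule sum_lessThan_add)
  also have "(\<Sum>j<N * d. U $$ (k, j) * f j) = 0"
    by (rule sum.neutral) (use k in \<open>auto simp: U_def q\<close>)
  also have "(\<Sum>j<N' * d. U $$ (k, N * d + j) * f (N * d + j))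
      = (\<Sum>i<N'. \<Sum>l<d. U $$ (k, N * d + (i * d + l)) * f (N * d + (i * d + l)))"
    by (rule sum_lessThan_mult)
  also have "\<dots> = (\<Sum>i<N'. \<Sum>l<d. if l = k then f (N * d + (i * d + k)) else 0)"
  proof (intro sum.cong refl)
    fix i l assume "i \<in> {..<N'}" "l \<in> {..<d}"
    then have "N * d + (i * d + l) < q" "(N * d + (i * d + l)) mod d = l"
      using block_index_less[of i N' l d] unfolding q by (auto simp: mod_add_left_eq[symmetric])
    then show "U $$ (k, N * d + (i * d + l)) * f (N * d + (i * d + l)) = (if l = k then f (N * d + (i * d + k)) else 0)"
      using k unfolding U_def by auto
  qed
  also have "\<dots> = (\<Sum>i<N'. f (N * d + (i * d + k)))" using k by simp
  finally show ?thesis unfolding q by (simp add: N' add.assoc)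
qed

lemma triangular_blocks_carrier:
  "U \<in> carrier_mat d q" "F1 \<in> carrier_mat q q" "F2 \<in> carrier_mat q d" "F3 \<in> carrier_mat d q"
  "F4 \<in> carrier_mat d d" "M \<in> carrier_mat q q"
  unfolding U_def F1_def F2_def F3_def F4_def M_def by auto

lemma F_four_block: "F = four_block_mat F1 F2 F3 F4"
proof -
  have "split_block F q q = (F1, F2, F3, F4)"
    unfolding split_block_def Let_def F1_def F2_def F3_def F4_def using F_carrier q_plus_d
    by (auto simp: carrier_matD)
  from split_block(5)[OF this, of d d] show ?thesis using F_carrier q_plus_d by (auto simp: carrier_matD)
qed

lemma U_mult_F1: "U * F1 + F3 = U"
proof (rule eq_matI)
  fix k c assume "k < dim_row U" "c < dim_col U"
  then have k: "k < d" and c: "c < q" using triangular_blocks_carrier by auto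
  have "(U * F1 + F3) $$ (k, c) = (\<Sum>j<q. U $$ (k, j) * F1 $$ (j, c)) + F3 $$ (k, c)"
    using mult_mat_index_sum[of U d q F1 q k c] k c triangular_blocks_carrier by simp
  also have "\<dots> = (\<Sum>j<q. U $$ (k, j) * F $$ (j, c)) + F $$ (q + k, c)"
    using k c by (auto simp: F1_def F3_def add.commute intro!: sum.cong)
  also have "\<dots> = (\<Sum>i<N. F $$ (N * d + (i * d + k), c))" by (rule U_sum[OF k])
  also have "\<dots> = U $$ (k, c)"
    using k c q_plus_d by (simp add: sum_tracking_rows_F U_def)
  finally show "(U * F1 + F3) $$ (k, c) = U $$ (k, c)" .
qed (use triangular_blocks_carrier in auto)

lemma U_mult_F2: "U * F2 + F4 = 1\<^sub>m d"
proof (rule eq_matI)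
  fix k c assume "k < dim_row (1\<^sub>m d :: real mat)" "c < dim_col (1\<^sub>m d :: real mat)"
  then have k: "k < d" and c: "c < d" by auto
  have "(U * F2 + F4) $$ (k, c) = (\<Sum>j<q. U $$ (k, j) * F2 $$ (j, c)) + F4 $$ (k, c)"
    using mult_mat_index_sum[of U d q F2 d k c] k c triangular_blocks_carrier by simp
  also have "\<dots> = (\<Sum>j<q. U $$ (k, j) * F $$ (j, c + q)) + F $$ (q + k, c + q)"
    using k c by (auto simp: F2_def F4_def add.commute intro!: sum.cong)
  also have "\<dots> = (\<Sum>i<N. F $$ (N * d + (i * d + k), c + q))" by (rule U_sum[OF k])
  also have "\<dots> = (if c = k then 1 else 0)"
  proof -
    have "(c + q) mod d = c" unfolding q_def using c by (simp add: add_mult_distrib[symmetric])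
    then show ?thesis using k c q_plus_d by (simp add: sum_tracking_rows_F q_def)
  qed
  finally show "(U * F2 + F4) $$ (k, c) = (1\<^sub>m d :: real mat) $$ (k, c)" using k c by simp
qed (use triangular_blocks_carrier in auto)

abbreviation "T \<equiv> four_block_mat (1\<^sub>m q) (0\<^sub>m q d) U (1\<^sub>m d)"
abbreviation "Ti \<equiv> four_block_mat (1\<^sub>m q) (0\<^sub>m q d) (- U) (1\<^sub>m d)"
abbreviation "Fb \<equiv> four_block_mat M F2 (0\<^sub>m d q) (1\<^sub>m d)"

lemma F_similar_block_triangular: "similar_mat_wit F Fb Ti T"
  unfolding F_four_block M_def
  by (rule similar_mat_wit_four_block_triangular[OF _ _ _ _ _ U_mult_F1 U_mult_F2]) (use triangular_blocks_carrier in auto)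

lemma char_poly_F: "char_poly (map_mat complex_of_real F) = char_poly (map_mat complex_of_real M) * [:-1, 1:] ^ d"
proof -
  interpret of_real_poly: map_poly_comm_ring_hom complex_of_real ..
  have real: "char_poly F = char_poly M * [:-1, 1:] ^ d"
    using char_poly_similar[of F Fb] F_similar_block_triangular triangular_blocks_carrier
    unfolding similar_mat_def
    by (auto simp: char_poly_four_block_mat_lower_left_zero char_poly_one_mat)
  have "char_poly (map_mat complex_of_real F) = map_poly complex_of_real (char_poly F)"
    by (rule of_real_hom.char_poly_hom[OF F_carrier])
  also have "\<dots> = map_poly complex_of_real (char_poly M) * map_poly complex_of_real ([:-1, 1:] ^ d)"
    unfolding real by (rule of_real_poly.hom_mult)
  also have "map_poly complex_of_real (char_poly M) = char_poly (map_mat complex_of_real M)"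
    using triangular_blocks_carrier by (intro of_real_hom.char_poly_hom[symmetric]) auto
  also have "map_poly complex_of_real ([:-1, 1:] ^ d) = [:-1, 1:] ^ d"
    by (simp add: of_real_poly.hom_power)
  finally show ?thesis .
qed

lemma eigenvalues_M_in_unit_disc:
  assumes "num_eigs_outside_disc F = d"
    and "poly (char_poly (map_mat complex_of_real M)) z = 0"
  shows "cmod z < 1"
proof (rule roots_in_unit_disc_of_outside_count[OF _ d_pos _ assms(2)])
  show "char_poly (map_mat complex_of_real M) \<noteq> 0"
    using degree_monic_char_poly[of "map_mat complex_of_real M" q] triangular_blocks_carrier by auto
  show "(\<Sum>z \<in> {z. poly (char_poly (map_mat complex_of_real M) * [:-1, 1:] ^ d) z = 0 \<and> cmod z \<ge> 1}.
      order z (char_poly (map_mat complex_of_real M) * [:-1, 1:] ^ d)) = d"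
    using assms(1) unfolding num_eigs_outside_disc_def Let_def char_poly_F .
qed

end

locale gradient_tracking_input = gradient_tracking +
  fixes th0 :: "real vec"
  assumes th0_carrier: "th0 \<in> carrier_vec p"
begin

definition "x_opt = Sigma_mat N d p Cs Gs *\<^sub>v th0"
definition "x_eq = vec (N * d) (\<lambda>r. x_opt $ (r mod d))"
definition "z_eq = - (Cblk *\<^sub>v x_eq + Qblk *\<^sub>v th0)"
definition "w_eq = x_eq @\<^sub>v z_eq"

lemma x_opt_carrier: "x_opt \<in> carrier_vec d"
  unfolding x_opt_def using Sigma_mat_characterization th0_carrier by auto

lemma equilibrium_carriers: "x_eq \<in> carrier_vec (N * d)" "z_eq \<in> carrier_vec (N * d)"
  "w_eq \<in> carrier_vec (N * d + N * d)"
  unfolding w_eq_def z_eq_def x_eq_def using block_carriers th0_carrier by auto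

lemma x_eq_block: "k < d \<Longrightarrow> x_eq $ (i * d + k) = x_opt $ k" if "i < N"
  unfolding x_eq_def using block_index_less[OF that] by simp

lemma sum_Cs_x_opt: "k < d \<Longrightarrow> (\<Sum>i<N. (Cs i *\<^sub>v x_opt) $ k) = (\<Sum>i<N. ((Cs i * Gs i) *\<^sub>v th0) $ k)"
proof -
  assume k: "k < d"
  have "Csum *\<^sub>v x_opt = (Csum * Sigma_mat N d p Cs Gs) *\<^sub>v th0"
    unfolding x_opt_def
    by (rule assoc_mult_mat_vec[symmetric, of Csum d d _ p]) (use Sigma_mat_characterization th0_carrier in auto)
  also have "\<dots> = CGsum *\<^sub>v th0" using Sigma_mat_characterization by simp
  finally show ?thesis
    using mat_sum_mult_vec_index[of "{..<N}" Cs d d x_opt k] mat_sum_mult_vec_index[of "{..<N}" "\<lambda>i. Cs i * Gs i" d p th0 k]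
      Cs_carrier CGs_carrier x_opt_carrier th0_carrier k by simp
qed

lemma z_eq_block:
  assumes i: "i < N" and k: "k < d"
  shows "z_eq $ (i * d + k) = ((Cs i * Gs i) *\<^sub>v th0) $ k - (Cs i *\<^sub>v x_opt) $ k"
proof -
  have ik: "i * d + k < N * d" using block_index_less[OF i k] .
  have ik_div_mod: "(i * d + k) div d = i" "(i * d + k) mod d = k" using k by simp_all
  have "(Cblk *\<^sub>v x_eq) $ (i * d + k) = (\<Sum>c<N * d. Cblk $$ (i * d + k, c) * x_eq $ c)"
    by (rule mult_mat_vec_index_sum[OF _ _ ik]) (use block_carriers equilibrium_carriers in auto)
  also have "\<dots> = (\<Sum>i'<N. \<Sum>l<d. Cblk $$ (i * d + k, i' * d + l) * x_eq $ (i' * d + l))"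
    by (rule sum_lessThan_mult)
  also have "\<dots> = (\<Sum>i'<N. \<Sum>l<d. if i' = i then Cs i $$ (k, l) * x_opt $ l else 0)"
    using ik k block_index_less by (intro sum.cong refl) (auto simp: blockdiag_def ik_div_mod x_eq_block)
  also have "\<dots> = (Cs i *\<^sub>v x_opt) $ k"
    using i k Cs_carrier x_opt_carrier by (subst sum.swap) (simp add: mult_mat_vec_index_sum[of _ d d] sum.delta)
  finally have C: "(Cblk *\<^sub>v x_eq) $ (i * d + k) = (Cs i *\<^sub>v x_opt) $ k" .
  have "(Qblk *\<^sub>v th0) $ (i * d + k) = (\<Sum>c<p. Qblk $$ (i * d + k, c) * th0 $ c)"
    by (rule mult_mat_vec_index_sum[OF _ th0_carrier ik]) (use block_carriers in auto)
  also have "\<dots> = (\<Sum>c<p. - ((Cs i * Gs i) $$ (k, c) * th0 $ c))"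
    using ik k CGs_carrier[OF i] by (intro sum.cong refl) (simp add: Qcol_def del: index_mult_mat)
  also have "\<dots> = - ((Cs i * Gs i) *\<^sub>v th0) $ k"
    using CGs_carrier[OF i] th0_carrier k by (simp add: mult_mat_vec_index_sum sum_negf)
  finally show ?thesis
    unfolding z_eq_def using ik C block_carriers equilibrium_carriers th0_carrier by simp
qed

text \<open>This is the first-order optimality condition satisfied by \<open>\<Sigma> \<theta>\<^sub>0\<close>.\<close>
lemma sum_z_eq_blocks: "k < d \<Longrightarrow> (\<Sum>i<N. z_eq $ (i * d + k)) = 0"
  using sum_Cs_x_opt by (simp add: z_eq_block sum_subtractf)

lemma AI_x_eq: "AI *\<^sub>v x_eq = x_eq"
proof (rule eq_vecI)
  fix r assume "r < dim_vec x_eq"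
  then have r: "r < N * d" using equilibrium_carriers by auto
  have "(AI *\<^sub>v x_eq) $ r = (\<Sum>c<N * d. AI $$ (r, c) * x_eq $ c)"
    by (rule mult_mat_vec_index_sum[OF _ _ r]) (use block_carriers equilibrium_carriers in auto)
  also have "\<dots> = (\<Sum>i'<N. \<Sum>l<d. AI $$ (r, i' * d + l) * x_eq $ (i' * d + l))"
    by (rule sum_lessThan_mult)
  also have "\<dots> = (\<Sum>i'<N. \<Sum>l<d. A $$ (r div d, i') * (if r mod d = l then x_opt $ l else 0))"
    using r block_index_less A_row_stochastic
    by (intro sum.cong refl) (auto simp: kron_I_def x_eq_block row_stochastic_def)
  also have "\<dots> = (\<Sum>i'<N. A $$ (r div d, i')) * x_opt $ (r mod d)"
    using d_pos by (simp add: sum_distrib_right if_distrib[where f = "\<lambda>x. _ * x"] cong: if_cong)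
  also have "\<dots> = x_eq $ r"
    using A_row_stochastic r unfolding row_stochastic_def x_eq_def by (auto simp: less_mult_imp_div_less)
  finally show "(AI *\<^sub>v x_eq) $ r = x_eq $ r" .
qed (use block_carriers equilibrium_carriers in auto)

lemma G_mult_vec:
  "G *\<^sub>v th0 = ((Ky * Qblk) *\<^sub>v th0) @\<^sub>v (((AtI - 1\<^sub>m (N * d)) * Qblk) *\<^sub>v th0)"
proof (rule eq_vecI)
  have c1: "Ky * Qblk \<in> carrier_mat (N * d) p" using Ky_carrier block_carriers by auto
  have c2: "(AtI - 1\<^sub>m (N * d)) * Qblk \<in> carrier_mat (N * d) p" using block_carriers by auto
  fix r assume "r < dim_vec (((Ky * Qblk) *\<^sub>v th0) @\<^sub>v (((AtI - 1\<^sub>m (N * d)) * Qblk) *\<^sub>v th0))"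
  then have r: "r < N * d + N * d" using c1 c2 by auto
  have "(G *\<^sub>v th0) $ r = (\<Sum>c<p. G $$ (r, c) * th0 $ c)"
    by (rule mult_mat_vec_index_sum[OF G_carrier th0_carrier r])
  also have "\<dots> = (\<Sum>c<p. (if r < N * d then (Ky * Qblk) $$ (r, c)
      else ((AtI - 1\<^sub>m (N * d)) * Qblk) $$ (r - N * d, c)) * th0 $ c)"
    using r by (intro sum.cong refl) (simp add: Gmat_def del: index_mult_mat)
  also have "\<dots> = (((Ky * Qblk) *\<^sub>v th0) @\<^sub>v (((AtI - 1\<^sub>m (N * d)) * Qblk) *\<^sub>v th0)) $ r"
    using r c1 c2 th0_carrier
    by (cases "r < N * d") (simp_all add: mult_mat_vec_index_sum[of _ "N * d" p] del: index_mult_mat index_mult_mat_vec)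
  finally show "(G *\<^sub>v th0) $ r = (((Ky * Qblk) *\<^sub>v th0) @\<^sub>v (((AtI - 1\<^sub>m (N * d)) * Qblk) *\<^sub>v th0)) $ r" .
qed (use G_carrier Ky_carrier block_carriers in auto)

lemma z_eq_balance:
  "(Cblk *\<^sub>v x_eq) + z_eq + (Qblk *\<^sub>v th0) = 0\<^sub>v (N * d)"
  unfolding z_eq_def using block_carriers equilibrium_carriers th0_carrier by (intro eq_vecI) auto

lemma w_eq_upper:
  "(AI + Ky * Cblk) *\<^sub>v x_eq + Ky *\<^sub>v z_eq + (Ky * Qblk) *\<^sub>v th0 = x_eq"
proof -
  have "(AI + Ky * Cblk) *\<^sub>v x_eq = x_eq + Ky *\<^sub>v (Cblk *\<^sub>v x_eq)"
    using block_carriers Ky_carrier equilibrium_carriers by (simp add: add_mult_distrib_mat_vec AI_x_eq)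
  moreover have "(Ky * Qblk) *\<^sub>v th0 = Ky *\<^sub>v (Qblk *\<^sub>v th0)"
    using block_carriers Ky_carrier th0_carrier by simp
  moreover have "Ky *\<^sub>v (Cblk *\<^sub>v x_eq) + Ky *\<^sub>v z_eq + Ky *\<^sub>v (Qblk *\<^sub>v th0) = 0\<^sub>v (N * d)"
    by (rule mult_mat_vec_sum3_zero[OF Ky_carrier _ _ _ z_eq_balance])
      (use block_carriers equilibrium_carriers th0_carrier in auto)
  ultimately show ?thesis
    using Ky_carrier block_carriers equilibrium_carriers th0_carrier
    by (intro eq_vecI) (auto dest!: arg_cong[where f = "\<lambda>w. w $ _"] simp: algebra_simps)
qed

lemma AtI_minus_one_mult_vec:
  assumes B: "B \<in> carrier_mat (N * d) n" and y: "y \<in> carrier_vec n"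
  shows "((AtI - 1\<^sub>m (N * d)) * B) *\<^sub>v y = AtI *\<^sub>v (B *\<^sub>v y) - B *\<^sub>v y"
proof -
  have "((AtI - 1\<^sub>m (N * d)) * B) *\<^sub>v y = (AtI - 1\<^sub>m (N * d)) *\<^sub>v (B *\<^sub>v y)"
    by (rule assoc_mult_mat_vec) (use B y block_carriers in auto)
  also have "\<dots> = AtI *\<^sub>v (B *\<^sub>v y) - 1\<^sub>m (N * d) *\<^sub>v (B *\<^sub>v y)"
    by (rule minus_mult_distrib_mat_vec) (use B y block_carriers in auto)
  finally show ?thesis using B y by simp
qed

lemma w_eq_lower:
  "((AtI - 1\<^sub>m (N * d)) * Cblk) *\<^sub>v x_eq + AtI *\<^sub>v z_eq + ((AtI - 1\<^sub>m (N * d)) * Qblk) *\<^sub>v th0 = z_eq"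
proof -
  have AtI0: "AtI *\<^sub>v (Cblk *\<^sub>v x_eq) + AtI *\<^sub>v z_eq + AtI *\<^sub>v (Qblk *\<^sub>v th0) = 0\<^sub>v (N * d)"
    by (rule mult_mat_vec_sum3_zero[OF _ _ _ _ z_eq_balance])
      (use block_carriers equilibrium_carriers th0_carrier in auto)
  show ?thesis
    unfolding AtI_minus_one_mult_vec[OF block_carriers(3) equilibrium_carriers(1)]
      AtI_minus_one_mult_vec[OF block_carriers(4) th0_carrier]
  proof (rule eq_vecI)
    fix i assume "i < dim_vec z_eq"
    then have i: "i < N * d" using equilibrium_carriers by simp
    have "(Cblk *\<^sub>v x_eq + z_eq + Qblk *\<^sub>v th0) $ i = 0" "(AtI *\<^sub>v (Cblk *\<^sub>v x_eq) + AtI *\<^sub>v z_eq + AtI *\<^sub>v (Qblk *\<^sub>v th0)) $ i = 0"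
      using z_eq_balance AtI0 i by simp_all
    then show "(AtI *\<^sub>v (Cblk *\<^sub>v x_eq) - Cblk *\<^sub>v x_eq + AtI *\<^sub>v z_eq
        + (AtI *\<^sub>v (Qblk *\<^sub>v th0) - Qblk *\<^sub>v th0)) $ i = z_eq $ i"
      using i block_carriers equilibrium_carriers th0_carrier by (simp add: algebra_simps)
  qed (use block_carriers equilibrium_carriers th0_carrier in auto)
qed

lemma w_eq_fixpoint: "F *\<^sub>v w_eq + G *\<^sub>v th0 = w_eq"
proof -
  have F_w_eq: "F *\<^sub>v w_eq = ((AI + Ky * Cblk) *\<^sub>v x_eq + Ky *\<^sub>v z_eq) @\<^sub>v
      (((AtI - 1\<^sub>m (N * d)) * Cblk) *\<^sub>v x_eq + AtI *\<^sub>v z_eq)"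
    unfolding Fmat_def w_eq_def
    by (rule four_block_mat_mult_vec) (use block_carriers Ky_carrier equilibrium_carriers in auto)
  have "F *\<^sub>v w_eq + G *\<^sub>v th0 =
      ((AI + Ky * Cblk) *\<^sub>v x_eq + Ky *\<^sub>v z_eq + (Ky * Qblk) *\<^sub>v th0) @\<^sub>v
      (((AtI - 1\<^sub>m (N * d)) * Cblk) *\<^sub>v x_eq + AtI *\<^sub>v z_eq + ((AtI - 1\<^sub>m (N * d)) * Qblk) *\<^sub>v th0)"
    unfolding F_w_eq G_mult_vec
    by (rule append_vec_add[where n = "N * d" and m = "N * d"])
      (use block_carriers Ky_carrier equilibrium_carriers th0_carrier in \<open>auto intro!: carrier_vecI\<close>)
  then show ?thesis unfolding w_eq_upper w_eq_lower w_eq_def .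
qed

text \<open>Since the agent-sum of the tracking variables is invariant and vanishes at the
  equilibrium, the initial error has no component along the eigenvalue-1 block.\<close>
lemma T_initial_error:
  assumes x0: "x0 \<in> carrier_vec (N * d)" and z0: "z0 \<in> carrier_vec (N * d)"
    and z0_sum: "\<forall>k<d. (\<Sum>i<N. z0 $ (i * d + k)) = 0"
  defines "e0 \<equiv> (x0 @\<^sub>v z0) - w_eq"
  shows "T *\<^sub>v e0 = vec q (\<lambda>i. e0 $ i) @\<^sub>v 0\<^sub>v d"
proof (rule eq_vecI)
  have e0: "e0 \<in> carrier_vec (q + d)" unfolding e0_def using x0 z0 equilibrium_carriers q_plus_d by auto
  have T: "T \<in> carrier_mat (q + d) (q + d)" using triangular_blocks_carrier by auto
  fix r assume "r < dim_vec (vec q (\<lambda>i. e0 $ i) @\<^sub>v 0\<^sub>v d)"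
  then have r: "r < q + d" by simp
  have split: "(T *\<^sub>v e0) $ r = (\<Sum>j<q. T $$ (r, j) * e0 $ j) + (\<Sum>j<d. T $$ (r, q + j) * e0 $ (q + j))"
    unfolding mult_mat_vec_index_sum[OF T e0 r] by (rule sum_lessThan_add)
  show "(T *\<^sub>v e0) $ r = (vec q (\<lambda>i. e0 $ i) @\<^sub>v 0\<^sub>v d) $ r"
  proof (cases "r < q")
    case True
    then show ?thesis
      unfolding split using triangular_blocks_carrier by (simp add: if_distrib[where f = "\<lambda>x. x * _"] cong: if_cong)
  next
    case False
    then obtain k where k: "k < d" and rk: "r = q + k" using r by (metis add_diff_inverse_nat add_less_cancel_left)
    have "(T *\<^sub>v e0) $ r = (\<Sum>j<q. U $$ (k, j) * e0 $ j) + e0 $ (q + k)"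
      unfolding split unfolding rk using k triangular_blocks_carrier by (simp add: if_distrib[where f = "\<lambda>x. x * _"] cong: if_cong)
    also have "\<dots> = (\<Sum>i<N. e0 $ (N * d + (i * d + k)))" by (rule U_sum[OF k])
    also have "\<dots> = (\<Sum>i<N. z0 $ (i * d + k)) - (\<Sum>i<N. z_eq $ (i * d + k))"
      using x0 z0 equilibrium_carriers k block_index_less by (simp add: e0_def w_eq_def sum_subtractf)
    also have "\<dots> = 0" using z0_sum sum_z_eq_blocks k by simp
    finally show ?thesis using k rk by simp
  qed
qed (use triangular_blocks_carrier in auto)

lemma traj_error_block_form:
  assumes x0: "x0 \<in> carrier_vec (N * d)" and z0: "z0 \<in> carrier_vec (N * d)"
    and z0_sum: "\<forall>k<d. (\<Sum>i<N. z0 $ (i * d + k)) = 0"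
  defines "e0 \<equiv> (x0 @\<^sub>v z0) - w_eq"
  shows "traj F G th0 (x0 @\<^sub>v z0) t - w_eq = Ti *\<^sub>v ((M ^\<^sub>m t *\<^sub>v vec q (\<lambda>i. e0 $ i)) @\<^sub>v 0\<^sub>v d)"
proof -
  have carriers: "T \<in> carrier_mat (q + d) (q + d)" "Ti \<in> carrier_mat (q + d) (q + d)"
    "Fb ^\<^sub>m t \<in> carrier_mat (q + d) (q + d)" "e0 \<in> carrier_vec (q + d)"
    unfolding e0_def using triangular_blocks_carrier x0 z0 equilibrium_carriers q_plus_d by auto
  have "traj F G th0 (x0 @\<^sub>v z0) t - w_eq = F ^\<^sub>m t *\<^sub>v e0"
    unfolding e0_def
    by (rule traj_minus_fixpoint[OF F_carrier G_carrier th0_carrier _ _ w_eq_fixpoint])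
      (use x0 z0 equilibrium_carriers in auto)
  also have "\<dots> = (Ti * Fb ^\<^sub>m t * T) *\<^sub>v e0"
    using similar_mat_wit_pow_id[OF F_similar_block_triangular, of t] by simp
  also have "\<dots> = (Ti * Fb ^\<^sub>m t) *\<^sub>v (T *\<^sub>v e0)"
    by (rule assoc_mult_mat_vec[OF mult_carrier_mat[OF carriers(2,3)] carriers(1,4)])
  also have "\<dots> = Ti *\<^sub>v (Fb ^\<^sub>m t *\<^sub>v (T *\<^sub>v e0))"
    by (rule assoc_mult_mat_vec[OF carriers(2,3) mult_mat_vec_carrier[OF carriers(1,4)]])
  also have "T *\<^sub>v e0 = vec q (\<lambda>i. e0 $ i) @\<^sub>v 0\<^sub>v d"
    unfolding e0_def by (rule T_initial_error[OF x0 z0 z0_sum])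
  also have "Fb ^\<^sub>m t *\<^sub>v (vec q (\<lambda>i. e0 $ i) @\<^sub>v 0\<^sub>v d) = (M ^\<^sub>m t *\<^sub>v vec q (\<lambda>i. e0 $ i)) @\<^sub>v 0\<^sub>v d"
    by (rule four_block_mat_upper_pow_mult_vec) (use triangular_blocks_carrier in auto)
  finally show ?thesis .
qed

lemma traj_tendsto_w_eq:
  assumes x0: "x0 \<in> carrier_vec (N * d)" and z0: "z0 \<in> carrier_vec (N * d)"
    and z0_sum: "\<forall>k<d. (\<Sum>i<N. z0 $ (i * d + k)) = 0"
    and outside: "num_eigs_outside_disc F = d" and j: "j < N * d + N * d"
  shows "(\<lambda>t. traj F G th0 (x0 @\<^sub>v z0) t $ j) \<longlonglongrightarrow> w_eq $ j"
proof -
  define h where "h = vec q (\<lambda>i. ((x0 @\<^sub>v z0) - w_eq) $ i)"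
  have h: "h \<in> carrier_vec q" unfolding h_def by simp
  have "(\<lambda>t. (Ti *\<^sub>v ((M ^\<^sub>m t *\<^sub>v h) @\<^sub>v 0\<^sub>v d)) $ j) \<longlonglongrightarrow> 0"
  proof (rule mult_mat_vec_tendsto_zero)
    fix l assume l: "l < q + d"
    have "(\<lambda>t. (M ^\<^sub>m t *\<^sub>v h) $ l) \<longlonglongrightarrow> 0" if "l < q"
      by (rule pow_mat_mult_vec_tendsto_zero[OF _ _ h that])
        (use triangular_blocks_carrier eigenvalues_M_in_unit_disc[OF outside] in auto)
    then show "(\<lambda>t. ((M ^\<^sub>m t *\<^sub>v h) @\<^sub>v 0\<^sub>v d) $ l) \<longlonglongrightarrow> 0"
      using l triangular_blocks_carrier by (cases "l < q") auto
  qed (use triangular_blocks_carrier h j in \<open>auto intro!: carrier_vecI simp flip: q_plus_d\<close>)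
  then have "(\<lambda>t. (traj F G th0 (x0 @\<^sub>v z0) t - w_eq) $ j + w_eq $ j) \<longlonglongrightarrow> 0 + w_eq $ j"
    unfolding h_def traj_error_block_form[OF x0 z0 z0_sum] by (rule tendsto_add[OF _ tendsto_const])
  moreover have "traj F G th0 (x0 @\<^sub>v z0) t \<in> carrier_vec (N * d + N * d)" for t
    by (induction t) (use F_carrier G_carrier th0_carrier x0 z0 in auto)
  ultimately show ?thesis using equilibrium_carriers j by simp
qed

end

theorem proposition2:
  fixes N d p :: nat
    and Cs Gs :: "nat \<Rightarrow> real mat"
    and A At Ky Kz :: "real mat"
    and th0 :: "real vec" and x0 z0 :: "real vec"
  assumes "N > 0" "d > 0" "p > 0"
    and "\<forall>i<N. symmetric_pd d (Cs i)"
    and "\<forall>i<N. Gs i \<in> carrier_mat d p"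
    and "row_stochastic N A" "simple_one_rest_stable A"
    and "col_stochastic N At" "simple_one_rest_stable At"
    and "Ky \<in> carrier_mat (N*d) (N*d)" "Kz = Ky"
    and "num_eigs_outside_disc (Fmat N d A At Cs Ky Kz) = d"
    and "th0 \<in> carrier_vec p"
    and "x0 \<in> carrier_vec (N*d)" "z0 \<in> carrier_vec (N*d)"
    and "\<forall>k<d. (\<Sum>i<N. z0 $ (i*d + k)) = 0"
  shows "(\<exists>B. \<forall>t. \<forall>j < 2*(N*d).
            \<bar>traj (Fmat N d A At Cs Ky Kz) (Gmat N d p At Cs Gs Ky) th0 (x0 @\<^sub>v z0) t $ j\<bar> \<le> B)
       \<and> (\<forall>i<N. \<forall>k<d.
            (\<lambda>t. traj (Fmat N d A At Cs Ky Kz) (Gmat N d p At Cs Gs Ky) th0 (x0 @\<^sub>v z0) t $ (i*d + k))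
              \<longlonglongrightarrow> (Sigma_mat N d p Cs Gs *\<^sub>v th0) $ k)"
proof -
  interpret gradient_tracking_input N d p Cs Gs A At Ky th0
    by unfold_locales (use assms in auto)
  have lim: "(\<lambda>t. traj F G th0 (x0 @\<^sub>v z0) t $ j) \<longlonglongrightarrow> w_eq $ j" if "j < 2 * (N * d)" for j
    using traj_tendsto_w_eq[of x0 z0 j] assms that by simp
  have bounded: "\<exists>B. \<forall>t. \<forall>j < 2 * (N * d). \<bar>traj F G th0 (x0 @\<^sub>v z0) t $ j\<bar> \<le> B"
    using lim by (intro convergent_components_bounded) (auto simp: convergent_def)
  have consensus: "(\<lambda>t. traj F G th0 (x0 @\<^sub>v z0) t $ (i * d + k)) \<longlonglongrightarrow> (Sigma_mat N d p Cs Gs *\<^sub>v th0) $ k"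
    if "i < N" "k < d" for i k
  proof -
    have "i * d + k < N * d" using block_index_less[OF that] .
    moreover have "w_eq $ (i * d + k) = (Sigma_mat N d p Cs Gs *\<^sub>v th0) $ k"
      using \<open>i * d + k < N * d\<close> x_eq_block[OF that] equilibrium_carriers unfolding w_eq_def x_opt_def by simp
    ultimately show ?thesis using lim[of "i * d + k"] by simp
  qed
  show ?thesis unfolding assms(11) using bounded consensus by blast
qed

end
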